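(* Let $n\ge 2$ and let $f$ be the $n$-ary operation on $\mathbb{Z}_8$ given by $f=2x_1\cdots x_n\left(\sum_{i=1}^n a_ix_i^2+\sum_{i=1}^n b_ix_i+c\right)$ with $a_i,b_i\in\{0,1\}$ and $c\in\{0,1,2,3\}$. Then $\sum_{i=1}^na_i+\sum_{i=1}^nb_i+c$ is even if and only if $f$ preserves the relation $$M=\{\mathbf{u}\in Z\mid a_{\{1,3\}}\equiv 0\pmod 4\},$$ where $a_{\{1,3\}}$ is the coefficient of $\mathbf{g}^{\{1,3\}}$ in the unique expression $\mathbf{u}=\sum_{A\in P_4}a_A\mathbf{g}^A$.
   Context: $P_4$ is the power set of $\{1,2,3,4\}$. For $A\in P_4$, $\mathbf{g}^A\in\mathbb{Z}_8^{P_4}$ is the tuple with $B$-component $1$ if $A\subseteq B$ and $0$ otherwise. Every $\mathbf{u}\in\mathbb{Z}_8^{P_4}$ has a unique expression $\mathbf{u}=\sum_{A\in P_4}a_A\mathbf{g}^A$ with $a_A\in\mathbb{Z}_8$. $Z\subseteq \mathbb{Z}_8^{P_4}$ consists of all $\mathbf{u}$ whose coefficients satisfy: (Z1) $a_{\{2\}}\equiv 2a_{\{1\}}\pmod 4$ and $a_{\{4\}}\equiv 2a_{\{3\}}\pmod 4$; (Z2) $a_A\equiv 0\pmod 2$ whenever $|A|\ge 2$; (Z3) $a_A\equiv 0\pmod 4$ whenever $|A|\ge 2$ and $A\cap\{2,4\}\neq\emptyset$; (Z4) $a_A=0$ whenever $\{2,4\}\subseteq A$. An operation preserves a relation if applying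 it componentwise to elements of the relation yields an element of the relation. *)

theory Defs
  imports Main
begin

(* Z_8 is represented by the integers 0..7 with arithmetic mod 8.
   Elements of Z_8^{P_4} are functions nat set => int, only their values on P_4 matter. *)

definition P4 :: "nat set set" where
  "P4 = Pow {1..4}"

(* the tuple sum_{A in P4} alpha_A g^A, evaluated at component B *)
definition gcomb :: "(nat set \<Rightarrow> int) \<Rightarrow> nat set \<Rightarrow> int" where
  "gcomb \<alpha> B = (\<Sum>A\<in>P4. if A \<subseteq> B then \<alpha> A else 0) mod 8"

(* alpha is a valid coefficient family in Z_8 satisfying (Z1)-(Z4) *)
definition Zcoeffs :: "(nat set \<Rightarrow> int) \<Rightarrow> bool" where
  "Zcoeffs \<alpha> \<longleftrightarrow>
     (\<forall>A\<in>P4. 0 \<le> \<alpha> A \<and> \<alpha> A < 8) \<and>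
     \<alpha> {2} mod 4 = (2 * \<alpha> {1}) mod 4 \<and> \<alpha> {4} mod 4 = (2 * \<alpha> {3}) mod 4 \<and>
     (\<forall>A\<in>P4. card A \<ge> 2 \<longrightarrow> \<alpha> A mod 2 = 0) \<and>
     (\<forall>A\<in>P4. card A \<ge> 2 \<and> A \<inter> {2,4} \<noteq> {} \<longrightarrow> \<alpha> A mod 4 = 0) \<and>
     (\<forall>A\<in>P4. {2,4} \<subseteq> A \<longrightarrow> \<alpha> A = 0)"

definition Zrel :: "(nat set \<Rightarrow> int) set" where
  "Zrel = {u. \<exists>\<alpha>. Zcoeffs \<alpha> \<and> (\<forall>B\<in>P4. u B = gcomb \<alpha> B)}"

definition Mrel :: "(nat set \<Rightarrow> int) set" where
  "Mrel = {u. \<exists>\<alpha>. Zcoeffs \<alpha> \<and> (\<forall>B\<in>P4. u B = gcomb \<alpha> B) \<and> \<alpha> {1,3} mod 4 = 0}"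

definition preserves :: "nat \<Rightarrow> ((nat \<Rightarrow> int) \<Rightarrow> int) \<Rightarrow> (nat set \<Rightarrow> int) set \<Rightarrow> bool" where
  "preserves n f R \<longleftrightarrow>
     (\<forall>us :: nat \<Rightarrow> nat set \<Rightarrow> int. (\<forall>i\<in>{1..n}. us i \<in> R) \<longrightarrow> (\<lambda>B. f (\<lambda>i. us i B)) \<in> R)"

definition opf :: "nat \<Rightarrow> (nat \<Rightarrow> int) \<Rightarrow> (nat \<Rightarrow> int) \<Rightarrow> int \<Rightarrow> (nat \<Rightarrow> int) \<Rightarrow> int" where
  "opf n a b c x =
     (2 * (\<Prod>i=1..n. x i) * ((\<Sum>i=1..n. a i * (x i)^2) + (\<Sum>i=1..n. b i * x i) + c)) mod 8"

end

theory Submission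
  imports Defs
begin

(* Write u in Z_8^{P_4} through its Moebius coefficients a_A = sum_{C <= A} (-1)^|A - C| u_C (mod 8).

   If the parity sum S is even, every value of f is divisible by 4: either some argument is even, or
   all arguments are odd and the second factor of f is congruent to S mod 2.  Hence all coefficients
   of the image are divisible by 4, which gives (Z1)-(Z3) and a_{1,3} = 0 (mod 4).  For (Z4), the
   coefficient at D + {2,4} is a Moebius sum over D of the second differences
   u(C + {2,4}) - u(C + {2}) - u(C + {4}) + u(C).  By (Z1)-(Z4) the four values of an argument on such
   a square are congruent mod 2 and have second difference 0 mod 4; ring operations preserve this, so
   writing f = 2 g mod 8 with an integer polynomial g, the second differences of the image vanish mod 8.

   Conversely, put g^{3} + 2 g^{4} in the second argument and g^{1} + 2 g^{2} in all others.  The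
   image vanishes at {}, {1}, {3} and equals 2 S at {1,3}, so its coefficient a_{1,3} is 2 S mod 8,
   which is divisible by 4 only if S is even. *)

section \<open>Moebius inversion on finite subset lattices\<close>

lemma sum_Pow_insert:
  assumes "finite B" "x \<notin> B"
  shows "(\<Sum>A\<in>Pow (insert x B). f A) = (\<Sum>A\<in>Pow B. f A) + (\<Sum>A\<in>Pow B. f (insert x A))"
proof -
  have "inj_on (insert x) (Pow B)"
    using assms(2) by (intro inj_onI) (metis Diff_insert_absorb PowD subsetD)
  moreover have "Pow B \<inter> insert x ` Pow B = {}"
    using assms(2) by auto
  ultimately show ?thesis
    unfolding Pow_insert using assms(1) by (simp add: sum.union_disjoint sum.reindex)
qed

definition mobius :: "('a set \<Rightarrow> 'b::comm_ring_1) \<Rightarrow> 'a set \<Rightarrow> 'b" where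
  "mobius W A = (\<Sum>C\<in>Pow A. (-1) ^ card (A - C) * W C)"

lemma mobius_empty [simp]: "mobius W {} = W {}"
  by (simp add: mobius_def)

lemma mobius_cong: "(\<And>C. C \<subseteq> A \<Longrightarrow> W C = V C) \<Longrightarrow> mobius W A = mobius V A"
  unfolding mobius_def by (intro sum.cong) auto

lemma mobius_dvd: "(\<And>C. C \<subseteq> A \<Longrightarrow> d dvd W C) \<Longrightarrow> d dvd mobius W A"
  unfolding mobius_def by (auto intro!: dvd_sum)

lemma mobius_insert:
  assumes "finite S" "x \<notin> S"
  shows "mobius W (insert x S) = mobius (\<lambda>C. W (insert x C) - W C) S"
proof -
  have "mobius W (insert x S) = (\<Sum>C\<in>Pow S. (-1) ^ card (insert x S - C) * W C)
        + (\<Sum>C\<in>Pow S. (-1) ^ card (insert x S - insert x C) * W (insert x C))"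
    unfolding mobius_def by (rule sum_Pow_insert[OF assms])
  also have "\<dots> = (\<Sum>C\<in>Pow S. - ((-1) ^ card (S - C) * W C))
        + (\<Sum>C\<in>Pow S. (-1) ^ card (S - C) * W (insert x C))"
  proof (intro arg_cong2[where f = "(+)"] sum.cong refl)
    fix C assume "C \<in> Pow S"
    then have "insert x S - C = insert x (S - C)" "insert x S - insert x C = S - C"
      and "x \<notin> S - C" "finite (S - C)"
      using assms by auto
    then show "(-1) ^ card (insert x S - C) * W C = - ((-1) ^ card (S - C) * W C)"
      and "(-1) ^ card (insert x S - insert x C) * W (insert x C) = (-1) ^ card (S - C) * W (insert x C)"
      by simp_all
  qed
  also have "\<dots> = mobius (\<lambda>C. W (insert x C) - W C) S"
    by (simp add: mobius_def sum_negf algebra_simps sum_subtractf)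
  finally show ?thesis .
qed

lemma sum_Pow_mobius: "finite B \<Longrightarrow> (\<Sum>A\<in>Pow B. mobius W A) = W B"
proof (induction B arbitrary: W rule: finite_induct)
  case (insert x F)
  have "(\<Sum>A\<in>Pow F. mobius W (insert x A)) = (\<Sum>A\<in>Pow F. mobius (\<lambda>C. W (insert x C) - W C) A)"
    using insert.hyps by (intro sum.cong refl mobius_insert) (auto intro: finite_subset)
  then show ?case
    using insert.hyps insert.IH by (simp add: sum_Pow_insert)
qed simp

lemma mobius_sum_Pow: "finite A \<Longrightarrow> mobius (\<lambda>C. \<Sum>D\<in>Pow C. f D) A = f A"
proof (induction A arbitrary: f rule: finite_induct)
  case (insert x F)
  have "mobius (\<lambda>C. \<Sum>D\<in>Pow C. f D) (insert x F) = mobius (\<lambda>C. \<Sum>D\<in>Pow C. f (insert x D)) F"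
    unfolding mobius_insert[OF insert.hyps]
  proof (rule mobius_cong)
    fix C assume "C \<subseteq> F"
    with insert.hyps have "finite C" "x \<notin> C" by (auto intro: finite_subset)
    then show "(\<Sum>D\<in>Pow (insert x C). f D) - (\<Sum>D\<in>Pow C. f D) = (\<Sum>D\<in>Pow C. f (insert x D))"
      by (simp add: sum_Pow_insert)
  qed
  then show ?case
    using insert.IH by simp
qed simp

lemma mobius_mod: "mobius (\<lambda>C. W C mod m) A mod m = mobius W A mod (m::int)"
proof -
  have "mobius (\<lambda>C. W C mod m) A mod m = (\<Sum>C\<in>Pow A. (-1) ^ card (A - C) * (W C mod m) mod m) mod m"
    unfolding mobius_def by (rule mod_sum_eq[symmetric])
  also have "\<dots> = (\<Sum>C\<in>Pow A. (-1) ^ card (A - C) * W C mod m) mod m"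
    by (simp only: mod_mult_right_eq)
  also have "\<dots> = mobius W A mod m"
    unfolding mobius_def by (rule mod_sum_eq)
  finally show ?thesis .
qed

section \<open>Squares congruent modulo 2 and 4\<close>

text \<open>The arguments stand for the values of a tuple at \<open>C\<close>, \<open>C \<union> {2}\<close>, \<open>C \<union> {4}\<close> and \<open>C \<union> {2, 4}\<close>.\<close>

definition square_cong :: "'a::comm_ring_1 \<Rightarrow> 'a \<Rightarrow> 'a \<Rightarrow> 'a \<Rightarrow> bool" where
  "square_cong x y z w \<longleftrightarrow> 2 dvd (y - x) \<and> 2 dvd (z - x) \<and> 4 dvd (w - y - z + x)"

lemma square_cong_iff:
  "square_cong x y z w \<longleftrightarrow> (\<exists>p q r. y = x + 2 * p \<and> z = x + 2 * q \<and> w = x + 2 * p + 2 * q + 4 * r)"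
proof
  assume "square_cong x y z w"
  then obtain p q r where "y - x = 2 * p" "z - x = 2 * q" "w - y - z + x = 4 * r"
    unfolding square_cong_def by (auto elim!: dvdE)
  then show "\<exists>p q r. y = x + 2 * p \<and> z = x + 2 * q \<and> w = x + 2 * p + 2 * q + 4 * r"
    by (auto simp: algebra_simps eq_diff_eq)
qed (auto simp: square_cong_def algebra_simps)

lemma square_cong_add:
  assumes "square_cong x y z w" "square_cong x' y' z' w'"
  shows "square_cong (x + x') (y + y') (z + z') (w + w')"
proof -
  have sums: "y + y' - (x + x') = (y - x) + (y' - x')" "z + z' - (x + x') = (z - x) + (z' - x')"
    "w + w' - (y + y') - (z + z') + (x + x') = (w - y - z + x) + (w' - y' - z' + x')"
    by (simp_all add: algebra_simps)
  show ?thesis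
    using assms unfolding square_cong_def sums by (blast intro: dvd_add)
qed

lemma square_cong_mult:
  assumes "square_cong x y z w" "square_cong x' y' z' w'"
  shows "square_cong (x * x') (y * y') (z * z') (w * w')"
proof -
  obtain p q r where y: "y = x + 2 * p" and z: "z = x + 2 * q" and w: "w = x + 2 * p + 2 * q + 4 * r"
    using assms(1) unfolding square_cong_iff by blast
  obtain p' q' r' where y': "y' = x' + 2 * p'" and z': "z' = x' + 2 * q'"
    and w': "w' = x' + 2 * p' + 2 * q' + 4 * r'"
    using assms(2) unfolding square_cong_iff by blast
  have "y * y' - x * x' = 2 * (x * p' + p * x' + 2 * p * p')"
    and "z * z' - x * x' = 2 * (x * q' + q * x' + 2 * q * q')"
    and "w * w' - y * y' - z * z' + x * x' =
      4 * (x * r' + r * x' + p * q' + q * p' + 2 * (p * r' + q * r' + r * p' + r * q') + 4 * r * r')"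
    unfolding y z w y' z' w' by (simp_all add: algebra_simps)
  then show ?thesis
    unfolding square_cong_def by (metis dvd_triv_left)
qed

lemma dvd_diff_mod:
  fixes x y m d :: int
  assumes "d dvd m" "d dvd y - x"
  shows "d dvd y mod m - x mod m"
proof -
  have "y mod m - x mod m = (y - x) - m * (y div m - x div m)"
    by (simp add: algebra_simps flip: minus_mult_div_eq_mod)
  with assms show ?thesis
    by (simp add: dvd_diff)
qed

lemma dvd_second_difference_mod:
  fixes x y z w m d :: int
  assumes "d dvd m" "d dvd w - y - z + x"
  shows "d dvd w mod m - y mod m - z mod m + x mod m"
proof -
  have "w mod m - y mod m - z mod m + x mod m = (w - y - z + x) - m * (w div m - y div m - z div m + x div m)"
    by (simp add: algebra_simps flip: minus_mult_div_eq_mod)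
  with assms show ?thesis
    by (simp add: dvd_diff)
qed

lemma square_cong_mod:
  fixes x y z w m :: int
  assumes "4 dvd m" "square_cong x y z w"
  shows "square_cong (x mod m) (y mod m) (z mod m) (w mod m)"
proof -
  have "2 dvd m"
    using assms(1) by (rule dvd_trans[rotated]) simp
  moreover have "2 dvd y - x" "2 dvd z - x" "4 dvd w - y - z + x"
    using assms(2) unfolding square_cong_def by blast+
  ultimately show ?thesis
    unfolding square_cong_def using assms(1) by (blast intro: dvd_diff_mod dvd_second_difference_mod)
qed

definition preserves_square_cong :: "'i set \<Rightarrow> (('i \<Rightarrow> 'a::comm_ring_1) \<Rightarrow> 'a) \<Rightarrow> bool" where
  "preserves_square_cong I h \<longleftrightarrow>
     (\<forall>x y z w. (\<forall>i\<in>I. square_cong (x i) (y i) (z i) (w i)) \<longrightarrow> square_cong (h x) (h y) (h z) (h w))"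

lemma preserves_square_congD:
  "preserves_square_cong I h \<Longrightarrow> (\<And>i. i \<in> I \<Longrightarrow> square_cong (x i) (y i) (z i) (w i))
    \<Longrightarrow> square_cong (h x) (h y) (h z) (h w)"
  unfolding preserves_square_cong_def by blast

lemma preserves_square_cong_const: "preserves_square_cong I (\<lambda>x. k)"
  by (simp add: preserves_square_cong_def square_cong_def)

lemma preserves_square_cong_var: "i \<in> I \<Longrightarrow> preserves_square_cong I (\<lambda>x. x i)"
  by (simp add: preserves_square_cong_def)

lemma preserves_square_cong_add:
  "preserves_square_cong I h \<Longrightarrow> preserves_square_cong I k \<Longrightarrow> preserves_square_cong I (\<lambda>x. h x + k x)"
  unfolding preserves_square_cong_def by (blast intro: square_cong_add)

lemma preserves_square_cong_mult:
  "preserves_square_cong I h \<Longrightarrow> preserves_square_cong I k \<Longrightarrow> preserves_square_cong I (\<lambda>x. h x * k x)"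
  unfolding preserves_square_cong_def by (blast intro: square_cong_mult)

lemma preserves_square_cong_sum:
  "finite J \<Longrightarrow> (\<And>j. j \<in> J \<Longrightarrow> preserves_square_cong I (f j)) \<Longrightarrow> preserves_square_cong I (\<lambda>x. \<Sum>j\<in>J. f j x)"
  by (induction J rule: finite_induct) (auto intro: preserves_square_cong_const preserves_square_cong_add)

lemma preserves_square_cong_prod:
  "finite J \<Longrightarrow> (\<And>j. j \<in> J \<Longrightarrow> preserves_square_cong I (f j)) \<Longrightarrow> preserves_square_cong I (\<lambda>x. \<Prod>j\<in>J. f j x)"
  by (induction J rule: finite_induct) (auto intro: preserves_square_cong_const preserves_square_cong_mult)

section \<open>Coefficients of the tuples in \<open>Z\<close> and \<open>M\<close>\<close>

lemma P4_iff: "B \<in> P4 \<longleftrightarrow> B \<subseteq> {1, 2, 3, 4}"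
  by (auto simp: P4_def)

lemma finite_if_P4: "B \<in> P4 \<Longrightarrow> finite B"
  by (simp add: P4_iff finite_subset)

lemma gcomb_eq_sum_Pow: "B \<in> P4 \<Longrightarrow> gcomb \<alpha> B = (\<Sum>A\<in>Pow B. \<alpha> A) mod 8"
proof -
  assume "B \<in> P4"
  then have "{A \<in> P4. A \<subseteq> B} = Pow B"
    by (auto simp: P4_iff)
  moreover have "(\<Sum>A\<in>P4. if A \<subseteq> B then \<alpha> A else 0) = (\<Sum>A\<in>{A \<in> P4. A \<subseteq> B}. \<alpha> A)"
    by (rule sum.inter_filter[symmetric]) (simp add: P4_def)
  ultimately show ?thesis
    unfolding gcomb_def by simp
qed

lemma Zcoeffs_eq_mobius:
  assumes "Zcoeffs \<alpha>" "\<forall>B\<in>P4. u B = gcomb \<alpha> B" "A \<in> P4"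
  shows "\<alpha> A = mobius u A mod 8"
proof -
  have "\<alpha> A = \<alpha> A mod 8"
    using assms(1,3) by (simp add: Zcoeffs_def)
  also have "\<dots> = mobius (\<lambda>C. \<Sum>D\<in>Pow C. \<alpha> D) A mod 8"
    by (simp add: mobius_sum_Pow finite_if_P4 assms(3))
  also have "\<dots> = mobius (\<lambda>C. (\<Sum>D\<in>Pow C. \<alpha> D) mod 8) A mod 8"
    by (rule mobius_mod[symmetric])
  also have "mobius (\<lambda>C. (\<Sum>D\<in>Pow C. \<alpha> D) mod 8) A = mobius u A"
  proof (rule mobius_cong)
    fix C assume "C \<subseteq> A"
    with assms(3) have "C \<in> P4"
      by (auto simp: P4_iff)
    with assms(2) show "(\<Sum>D\<in>Pow C. \<alpha> D) mod 8 = u C"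
      by (simp add: gcomb_eq_sum_Pow)
  qed
  finally show ?thesis .
qed

lemma Zcoeffs_even:
  assumes "Zcoeffs \<alpha>" "A \<in> P4" "A \<inter> {2, 4} \<noteq> {}"
  shows "even (\<alpha> A)"
proof (cases "card A \<ge> 2")
  case True
  then show ?thesis
    using assms by (auto simp: Zcoeffs_def)
next
  case False
  then have "\<forall>x\<in>A. \<forall>y\<in>A. x = y"
    using card_le_Suc0_iff_eq[OF finite_if_P4[OF assms(2)]] by simp
  with assms(3) have "A = {2} \<or> A = {4}"
    by blast
  have "\<alpha> {2} mod 4 = 2 * \<alpha> {1} mod 4" "\<alpha> {4} mod 4 = 2 * \<alpha> {3} mod 4"
    using assms(1) by (simp_all add: Zcoeffs_def)
  then have "even (\<alpha> {2})" "even (\<alpha> {4})"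
    by presburger+
  with \<open>A = {2} \<or> A = {4}\<close> show ?thesis
    by blast
qed

lemma square_cong_gcomb:
  assumes "Zcoeffs \<alpha>" "C \<subseteq> {1, 3}"
  shows "square_cong (gcomb \<alpha> C) (gcomb \<alpha> (insert 2 C)) (gcomb \<alpha> (insert 4 C))
    (gcomb \<alpha> (insert 2 (insert 4 C)))"
proof -
  define S where "S = (\<lambda>B. \<Sum>A\<in>Pow B. \<alpha> A)"
  have C: "finite C" "2 \<notin> C" "4 \<notin> C"
    using assms(2) finite_subset[OF assms(2)] by auto
  have in_P4: "C \<in> P4" "insert 2 C \<in> P4" "insert 4 C \<in> P4" "insert 2 (insert 4 C) \<in> P4"
    using assms(2) by (auto simp: P4_iff)
  have even_insert: "even (\<Sum>A\<in>Pow C. \<alpha> (insert j A))" if "j \<in> {2, 4}" for j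
  proof (rule dvd_sum)
    fix A assume "A \<in> Pow C"
    with assms(2) that show "even (\<alpha> (insert j A))"
      by (intro Zcoeffs_even[OF assms(1)]) (auto simp: P4_iff)
  qed
  have no_24: "(\<Sum>A\<in>Pow C. \<alpha> (insert 2 (insert 4 A))) = 0"
  proof (rule sum.neutral, rule ballI)
    fix A assume "A \<in> Pow C"
    with assms(2) have "insert 2 (insert 4 A) \<in> P4"
      by (auto simp: P4_iff)
    with assms(1) show "\<alpha> (insert 2 (insert 4 A)) = 0"
      by (simp add: Zcoeffs_def)
  qed
  have "S (insert 2 C) = S C + (\<Sum>A\<in>Pow C. \<alpha> (insert 2 A))"
    "S (insert 4 C) = S C + (\<Sum>A\<in>Pow C. \<alpha> (insert 4 A))"
    "S (insert 2 (insert 4 C)) = S (insert 4 C) + (\<Sum>A\<in>Pow C. \<alpha> (insert 2 A))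
       + (\<Sum>A\<in>Pow C. \<alpha> (insert 2 (insert 4 A)))"
    using C unfolding S_def by (simp_all add: sum_Pow_insert)
  then have "square_cong (S C) (S (insert 2 C)) (S (insert 4 C)) (S (insert 2 (insert 4 C)))"
    using even_insert no_24 unfolding square_cong_def by simp
  then have "square_cong (S C mod 8) (S (insert 2 C) mod 8) (S (insert 4 C) mod 8)
    (S (insert 2 (insert 4 C)) mod 8)"
    by (rule square_cong_mod[rotated]) simp
  then show ?thesis
    using in_P4 by (simp only: gcomb_eq_sum_Pow S_def)
qed

lemma Mrel_memberI:
  assumes reduced: "\<forall>B\<in>P4. W B mod 8 = W B"
    and mult4: "\<forall>B\<in>P4. 4 dvd W B"
    and mixed: "\<forall>C\<subseteq>{1, 3}. 8 dvd (W (insert 2 (insert 4 C)) - W (insert 2 C) - W (insert 4 C) + W C)"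
  shows "W \<in> Mrel"
proof -
  define \<beta> where "\<beta> A = mobius W A mod 8" for A
  have \<beta>_mult4: "4 dvd \<beta> A" if "A \<in> P4" for A
    unfolding \<beta>_def using that mult4 by (intro dvd_mod mobius_dvd) (auto simp: P4_iff)
  have \<beta>_zero: "\<beta> A = 0" if "A \<in> P4" "{2, 4} \<subseteq> A" for A
  proof -
    define D where "D = A - {2, 4}"
    have D: "D \<subseteq> {1, 3}" and A: "A = insert 2 (insert 4 D)"
      using that by (auto simp: D_def P4_iff)
    then have "finite D" "2 \<notin> D" "4 \<notin> D"
      using finite_subset[OF \<open>D \<subseteq> {1, 3}\<close>] by auto
    with A have "mobius W A = mobius (\<lambda>C. W (insert 2 (insert 4 C)) - W (insert 4 C) - (W (insert 2 C) - W C)) D"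
      by (simp add: mobius_insert)
    moreover have "8 dvd \<dots>"
      using mixed D(1) by (intro mobius_dvd) (auto simp: algebra_simps)
    ultimately show ?thesis
      by (simp add: \<beta>_def)
  qed
  have "\<beta> A mod 4 = 0" "\<beta> A mod 2 = 0" "2 * \<beta> A mod 4 = 0" if "A \<in> P4" for A
    using \<beta>_mult4[OF that] by presburger+
  moreover have "{1} \<in> P4" "{2} \<in> P4" "{3} \<in> P4" "{4} \<in> P4" "{1, 3} \<in> P4"
    by (simp_all add: P4_iff)
  ultimately have "Zcoeffs \<beta>" "\<beta> {1, 3} mod 4 = 0"
    using \<beta>_zero by (auto simp: Zcoeffs_def \<beta>_def)
  moreover have "W B = gcomb \<beta> B" if "B \<in> P4" for B
  proof -
    have "gcomb \<beta> B = (\<Sum>A\<in>Pow B. mobius W A) mod 8"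
      using that by (simp add: gcomb_eq_sum_Pow \<beta>_def mod_sum_eq)
    also have "\<dots> = W B"
      using that reduced by (simp add: sum_Pow_mobius finite_if_P4)
    finally show ?thesis ..
  qed
  ultimately show ?thesis
    unfolding Mrel_def by (intro CollectI exI[of _ \<beta>]) simp
qed

section \<open>The operation \<open>f\<close>\<close>

definition opf_poly :: "nat \<Rightarrow> (nat \<Rightarrow> int) \<Rightarrow> (nat \<Rightarrow> int) \<Rightarrow> int \<Rightarrow> (nat \<Rightarrow> int) \<Rightarrow> int" where
  "opf_poly n a b c x = (\<Prod>i=1..n. x i) * ((\<Sum>i=1..n. a i * (x i)^2) + (\<Sum>i=1..n. b i * x i) + c)"

lemma opf_eq_opf_poly: "opf n a b c x = 2 * opf_poly n a b c x mod 8"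
  by (simp add: opf_def opf_poly_def mult.assoc)

lemma preserves_square_cong_opf_poly: "preserves_square_cong {1..n} (opf_poly n a b c)"
  unfolding opf_poly_def power2_eq_square
proof (intro preserves_square_cong_mult preserves_square_cong_add)
  show "preserves_square_cong {1..n} (\<lambda>x. \<Prod>i=1..n. x i)"
    by (rule preserves_square_cong_prod) (simp_all add: preserves_square_cong_var)
  show "preserves_square_cong {1..n} (\<lambda>x. \<Sum>i=1..n. a i * (x i * x i))"
    by (rule preserves_square_cong_sum)
      (simp_all add: preserves_square_cong_mult preserves_square_cong_const preserves_square_cong_var)
  show "preserves_square_cong {1..n} (\<lambda>x. \<Sum>i=1..n. b i * x i)"
    by (rule preserves_square_cong_sum)
      (simp_all add: preserves_square_cong_mult preserves_square_cong_const preserves_square_cong_var)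
qed (rule preserves_square_cong_const)

lemma even_opf_poly:
  assumes "even ((\<Sum>i=1..n. a i) + (\<Sum>i=1..n. b i) + c)"
  shows "even (opf_poly n a b c x)"
proof (cases "\<exists>i\<in>{1..n}. even (x i)")
  case True
  then have "even (\<Prod>i=1..n. x i)"
    by (metis dvd_prodI dvd_trans finite_atLeastAtMost)
  then show ?thesis
    unfolding opf_poly_def by simp
next
  case False
  then have "even (a i * (x i)^2 - a i)" "even (b i * x i - b i)" if "i \<in> {1..n}" for i
    using that by auto
  then have "even (\<Sum>i=1..n. a i * (x i)^2 - a i)" "even (\<Sum>i=1..n. b i * x i - b i)"
    by (auto intro: dvd_sum)
  moreover have "(\<Sum>i=1..n. a i * (x i)^2) + (\<Sum>i=1..n. b i * x i) + c =
      ((\<Sum>i=1..n. a i) + (\<Sum>i=1..n. b i) + c) + (\<Sum>i=1..n. a i * (x i)^2 - a i) + (\<Sum>i=1..n. b i * x i - b i)"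
    by (simp add: sum_subtractf)
  ultimately show ?thesis
    using assms unfolding opf_poly_def by simp
qed

lemma preserves_Mrel_if_even:
  assumes "even ((\<Sum>i=1..n. a i) + (\<Sum>i=1..n. b i) + c)"
  shows "preserves n (opf n a b c) Mrel"
  unfolding preserves_def
proof (intro allI impI)
  fix us :: "nat \<Rightarrow> nat set \<Rightarrow> int"
  assume us: "\<forall>i\<in>{1..n}. us i \<in> Mrel"
  define g where "g = (\<lambda>B. opf_poly n a b c (\<lambda>i. us i B))"
  have "square_cong (us i C) (us i (insert 2 C)) (us i (insert 4 C)) (us i (insert 2 (insert 4 C)))"
    if i: "i \<in> {1..n}" and C: "C \<subseteq> {1, 3}" for i C
  proof -
    from us i have "us i \<in> Mrel" ..
    then obtain \<alpha> where \<alpha>: "Zcoeffs \<alpha>" "\<forall>B\<in>P4. us i B = gcomb \<alpha> B"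
      by (auto simp: Mrel_def)
    have "C \<in> P4" "insert 2 C \<in> P4" "insert 4 C \<in> P4" "insert 2 (insert 4 C) \<in> P4"
      using C by (auto simp: P4_iff)
    with square_cong_gcomb[OF \<alpha>(1) C] show ?thesis
      by (simp only: \<alpha>(2)[rule_format])
  qed
  then have g_square: "square_cong (g C) (g (insert 2 C)) (g (insert 4 C)) (g (insert 2 (insert 4 C)))"
    if "C \<subseteq> {1, 3}" for C
    unfolding g_def using that by (intro preserves_square_congD[OF preserves_square_cong_opf_poly])
  show "(\<lambda>B. opf n a b c (\<lambda>i. us i B)) \<in> Mrel"
  proof (rule Mrel_memberI, safe)
    fix B
    have "4 dvd 2 * g B"
      using even_opf_poly[OF assms, of "\<lambda>i. us i B"] unfolding g_def by (auto elim!: evenE)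
    then show "4 dvd opf n a b c (\<lambda>i. us i B)"
      unfolding opf_eq_opf_poly g_def by (auto intro: dvd_mod)
  next
    fix C :: "nat set" assume "C \<subseteq> {1, 3}"
    then have "4 dvd g (insert 2 (insert 4 C)) - g (insert 2 C) - g (insert 4 C) + g C"
      using g_square unfolding square_cong_def by blast
    then have "2 * 4 dvd 2 * (g (insert 2 (insert 4 C)) - g (insert 2 C) - g (insert 4 C) + g C)"
      by (rule mult_dvd_mono[OF dvd_refl])
    then show "8 dvd opf n a b c (\<lambda>i. us i (insert 2 (insert 4 C))) - opf n a b c (\<lambda>i. us i (insert 2 C))
        - opf n a b c (\<lambda>i. us i (insert 4 C)) + opf n a b c (\<lambda>i. us i C)"
      unfolding opf_eq_opf_poly g_def
      by (intro dvd_second_difference_mod) (simp_all add: right_diff_distrib distrib_left)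
  qed (simp add: opf_def)
qed

lemma opf_eq_0: "i \<in> {1..n} \<Longrightarrow> x i = 0 \<Longrightarrow> opf n a b c x = 0"
  unfolding opf_def by (subst prod_zero) auto

lemma opf_eq_if_all_1:
  "(\<forall>i\<in>{1..n}. x i = 1) \<Longrightarrow> opf n a b c x = 2 * ((\<Sum>i=1..n. a i) + (\<Sum>i=1..n. b i) + c) mod 8"
  unfolding opf_def by simp

lemma generator_pair_in_Mrel:
  assumes "(j, k) \<in> {(1, 2), (3, 4)}"
  shows "(\<lambda>B. (if j \<in> B then 1 else 0) + (if k \<in> B then 2 else 0) :: int) \<in> Mrel"
proof -
  define \<alpha> :: "nat set \<Rightarrow> int" where "\<alpha> A = (if A = {j} then 1 else 0) + (if A = {k} then 2 else 0)" for A
  have jk: "j = 1 \<and> k = 2 \<or> j = 3 \<and> k = 4"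
    using assms by auto
  have "\<alpha> {2} mod 4 = 2 * \<alpha> {1} mod 4" "\<alpha> {4} mod 4 = 2 * \<alpha> {3} mod 4"
    using jk unfolding \<alpha>_def by (elim disjE conjE; simp)+
  moreover have "0 \<le> \<alpha> A \<and> \<alpha> A < 8" "card A \<ge> 2 \<Longrightarrow> \<alpha> A = 0" "{2, 4} \<subseteq> A \<Longrightarrow> \<alpha> A = 0" for A
    unfolding \<alpha>_def by auto
  ultimately have "Zcoeffs \<alpha>" "\<alpha> {1, 3} = 0"
    unfolding Zcoeffs_def by simp_all
  moreover have "(if j \<in> B then 1 else 0) + (if k \<in> B then 2 else 0) = gcomb \<alpha> B" if "B \<in> P4" for B
  proof -
    have "(\<Sum>A\<in>Pow B. \<alpha> A) = (if j \<in> B then 1 else 0) + (if k \<in> B then 2 else 0)"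
      using finite_if_P4[OF that] by (simp add: \<alpha>_def sum.distrib)
    then show ?thesis
      using that by (simp add: gcomb_eq_sum_Pow)
  qed
  ultimately show ?thesis
    unfolding Mrel_def by (intro CollectI exI[of _ \<alpha>]) simp
qed

lemma even_if_preserves_Mrel:
  assumes "n \<ge> 2" "preserves n (opf n a b c) Mrel"
  shows "even ((\<Sum>i=1..n. a i) + (\<Sum>i=1..n. b i) + c)"
proof -
  define S where "S = (\<Sum>i=1..n. a i) + (\<Sum>i=1..n. b i) + c"
  define us :: "nat \<Rightarrow> nat set \<Rightarrow> int" where "us i =
    (if i = 2 then (\<lambda>B. (if 3 \<in> B then 1 else 0) + (if 4 \<in> B then 2 else 0))
     else (\<lambda>B. (if 1 \<in> B then 1 else 0) + (if 2 \<in> B then 2 else 0)))" for i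
  define W where "W = (\<lambda>B. opf n a b c (\<lambda>i. us i B))"
  have "us i \<in> Mrel" for i
    unfolding us_def by (simp add: generator_pair_in_Mrel)
  moreover have "(\<forall>i\<in>{1..n}. us i \<in> Mrel) \<longrightarrow> W \<in> Mrel"
    using assms(2) unfolding preserves_def W_def by (rule spec)
  ultimately have "W \<in> Mrel"
    by simp
  then obtain \<beta> where \<beta>: "Zcoeffs \<beta>" "\<forall>B\<in>P4. W B = gcomb \<beta> B" "\<beta> {1, 3} mod 4 = 0"
    by (auto simp: Mrel_def)
  have one: "1 \<in> {1..n}" and two: "2 \<in> {1..n}"
    using assms(1) by auto
  have "W {} = 0"
    unfolding W_def by (rule opf_eq_0[OF one]) (simp add: us_def)
  moreover have "W {1} = 0"
    unfolding W_def by (rule opf_eq_0[OF two]) (simp add: us_def)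
  moreover have "W {3} = 0"
    unfolding W_def by (rule opf_eq_0[OF one]) (simp add: us_def)
  moreover have "W {1, 3} = 2 * S mod 8"
    unfolding W_def S_def by (rule opf_eq_if_all_1) (simp add: us_def)
  moreover have "\<beta> {1, 3} = mobius W {1, 3} mod 8"
    using \<beta>(1,2) by (rule Zcoeffs_eq_mobius) (simp add: P4_iff)
  moreover have "mobius W {1, 3} = mobius (\<lambda>C. W (insert 1 C) - W C) {3}"
    by (rule mobius_insert) simp_all
  moreover have "\<dots> = W {1, 3} - W {3} - (W {1} - W {})"
    by (subst mobius_insert) simp_all
  ultimately have "\<beta> {1, 3} = 2 * S mod 8"
    by (simp only: diff_zero mod_mod_trivial)
  with \<beta>(3) show ?thesis
    unfolding S_def[symmetric] by presburger
qed

theorem lemma3p9: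
  fixes n :: nat and a b :: "nat \<Rightarrow> int" and c :: int
  assumes "n \<ge> 2"
    and "\<forall>i\<in>{1..n}. a i \<in> {0, 1}"
    and "\<forall>i\<in>{1..n}. b i \<in> {0, 1}"
    and "c \<in> {0, 1, 2, 3}"
  shows "even ((\<Sum>i=1..n. a i) + (\<Sum>i=1..n. b i) + c) \<longleftrightarrow> preserves n (opf n a b c) Mrel"
  using preserves_Mrel_if_even even_if_preserves_Mrel[OF assms(1)] by blast

end
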